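(* Let $n,m$ be positive integers. For a dominant region $R\in\mathcal{R}^m_n$ with Shi tableau entries $k_{i,j}=k_{i,j}(R)$, $1\le i\le j\le n$, define $\varphi_n(R)=(\lambda_1,\dots,\lambda_n)$ with $\lambda_i=\sum_{j=i}^n k_{i,j}$. Then $\varphi_n$ is a bijection from $\mathcal{R}^m_n$ onto $\mathcal{P}^m_n$.
   Context: Type $A_n$: $V=\{x\in\mathbb{R}^{n+1}:\sum x_i=0\}$, positive roots $\alpha_{ij}=\varepsilon_i-\varepsilon_{j+1}$ ($1\le i\le j\le n$), $H_{\alpha,k}=\{v\in V:\langle v,\alpha\rangle=k\}$. $\mathrm{Cat}^m(A_n)$ is the arrangement of the $H_{\alpha,k}$, $\alpha$ positive, $0\le k\le m$; $\mathcal{R}^m_n$ is the set of its dominant regions (regions contained in $\{v:\langle v,\alpha\rangle\ge0\ \forall\alpha>0\}$). For $R\in\mathcal{R}^m_n$ and $1\le i\le j\le n$, $k_{i,j}(R)$ is the unique integer $k\in\{0,\dots,m\}$ such that for all $x\in R$: $k\le\langle\alpha_{ij},x\rangle\le k+1$ if $k<m$, and $\langle\alpha_{ij},x\rangle\ge m$ if $k=m$ (i.e. the number of hyperplanes $H_{\alpha_{ij},t}$, $1\le t\le m$, separating $R$ from the origin). The collection $\{k_{i,j}(R)\}$ is the Shi tableau of $R$. $\mathcal{P}^m_n$ is the set of integer partitions $(\lambda_1\ge\cdots\ge\lambda_n\ge0)$ with $\lambda_i\le m(n-i+1)$. *)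

theory Defs
  imports "HOL-Analysis.Analysis"
begin

text \<open>Vectors of R^(n+1) are modelled as functions nat => real supported on {1..n+1}
  (coordinate i is x i); the topology is the product topology on nat => real,
  which on this finite-dimensional subspace is the Euclidean one.\<close>

definition typeA_V :: "nat \<Rightarrow> (nat \<Rightarrow> real) set" where
  "typeA_V n = {x. (\<forall>i. i \<notin> {1..n+1} \<longrightarrow> x i = 0) \<and> (\<Sum>i=1..n+1. x i) = 0}"

text \<open>The pairing of the positive root alpha_ij = e_i - e_(j+1) with x.\<close>
definition root_pair :: "nat \<Rightarrow> nat \<Rightarrow> (nat \<Rightarrow> real) \<Rightarrow> real" where
  "root_pair i j x = x i - x (j+1)"

definition cat_hyperplanes :: "nat \<Rightarrow> nat \<Rightarrow> (nat \<Rightarrow> real) set" where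
  "cat_hyperplanes n m = {x \<in> typeA_V n. \<exists>i j k. 1 \<le> i \<and> i \<le> j \<and> j \<le> n \<and> k \<le> m
      \<and> root_pair i j x = real k}"

definition cat_regions :: "nat \<Rightarrow> nat \<Rightarrow> (nat \<Rightarrow> real) set set" where
  "cat_regions n m = {connected_component_set (typeA_V n - cat_hyperplanes n m) x | x.
      x \<in> typeA_V n - cat_hyperplanes n m}"

definition dominant_cone :: "nat \<Rightarrow> (nat \<Rightarrow> real) set" where
  "dominant_cone n = {v. \<forall>i j. 1 \<le> i \<and> i \<le> j \<and> j \<le> n \<longrightarrow> root_pair i j v \<ge> 0}"

definition dominant_regions :: "nat \<Rightarrow> nat \<Rightarrow> (nat \<Rightarrow> real) set set" where
  "dominant_regions n m = {R \<in> cat_regions n m. R \<subseteq> dominant_cone n}"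

text \<open>Shi tableau entry: number of hyperplanes H_(alpha_ij,t), 1 <= t <= m,
  separating R from the origin.\<close>
definition shi_k :: "nat \<Rightarrow> (nat \<Rightarrow> real) set \<Rightarrow> nat \<Rightarrow> nat \<Rightarrow> nat" where
  "shi_k m R i j = card {t \<in> {1..m}. \<forall>x \<in> R. root_pair i j x > real t}"

definition partitions_P :: "nat \<Rightarrow> nat \<Rightarrow> (nat \<Rightarrow> nat) set" where
  "partitions_P n m = {lam. (\<forall>i. i \<notin> {1..n} \<longrightarrow> lam i = 0)
      \<and> (\<forall>i. 1 \<le> i \<and> i < n \<longrightarrow> lam (i+1) \<le> lam i)
      \<and> (\<forall>i\<in>{1..n}. lam i \<le> m * (n - i + 1))}"

definition phi :: "nat \<Rightarrow> nat \<Rightarrow> (nat \<Rightarrow> real) set \<Rightarrow> nat \<Rightarrow> nat" where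
  "phi n m R = (\<lambda>i. if i \<in> {1..n} then (\<Sum>j=i..n. shi_k m R i j) else 0)"

end

theory Submission
  imports Defs
begin

text \<open>A point x of V on no hyperplane of Cat^m(A_n) lies in the dominant chamber iff
  x_1 > x_2 > ... > x_(n+1) and no difference x_b - x_a (a \<noteq> b) lies in {0..m}. Its region is
  determined by which of the inequalities x_l + t < x_i (i < l, 1 \<le> t \<le> m) hold, and lambda_i
  counts the true ones in row i. Injectivity: by descending induction on i, once the relative
  order of the numbers x_l + t (l > i) is known, lambda_i fixes the position of x_i among them,
  hence every comparison involving x_i. Surjectivity: choose x_(n+1), x_n, ..., x_1 in turn,
  placing x_i above x_(i+1) so that exactly lambda_i of the numbers x_l + t lie below it; the
  conditions lambda_(i+1) \<le> lambda_i \<le> m(n-i+1) say precisely that such a position exists.\<close>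

section \<open>Regions as connected components\<close>

lemma continuous_on_root_pair: "continuous_on UNIV (root_pair i j)"
  unfolding root_pair_def[abs_def]
  by (intro continuous_intros continuous_on_product_coordinates)

lemma connected_component_gt_iff:
  fixes f :: "'a::topological_space \<Rightarrow> real"
  assumes y: "y \<in> connected_component_set S x" and avoid: "\<forall>z\<in>S. f z \<noteq> c"
    and f: "continuous_on S f"
  shows "f y > c \<longleftrightarrow> f x > c"
proof -
  let ?C = "connected_component_set S x"
  have x: "x \<in> ?C" and sub: "?C \<subseteq> S"
    using y connected_component_in[of S x y] connected_component_subset[of S x] by auto
  have "connected (f ` ?C)"
    by (rule connected_continuous_image[OF continuous_on_subset[OF f sub]]) simp
  moreover have "c \<notin> f ` ?C" using avoid sub by auto
  ultimately have no_straddle: "\<not> (u \<le> c \<and> c \<le> v)" if "u \<in> f ` ?C" "v \<in> f ` ?C" for u v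
    using that unfolding connected_iff_interval by blast
  have "f x \<noteq> c" "f y \<noteq> c" using avoid sub x y by auto
  then show ?thesis
    using no_straddle[of "f x" "f y"] no_straddle[of "f y" "f x"] x y by force
qed

lemma segment_in_connected_component:
  fixes x y :: "'a \<Rightarrow> real"
  assumes "\<And>s. s \<in> {0..1} \<Longrightarrow> (\<lambda>k. (1 - s) * x k + s * y k) \<in> S"
  shows "y \<in> connected_component_set S x"
proof -
  let ?p = "\<lambda>s::real. \<lambda>k. (1 - s) * x k + s * y k"
  have "continuous_on {0..1} ?p"
    by (intro continuous_on_coordinatewise_then_product continuous_intros)
  then have "connected (?p ` {0..1})"
    by (rule connected_continuous_image) simp
  moreover have "?p ` {0..1} \<subseteq> S" using assms by auto
  moreover have "x \<in> ?p ` {0..1}" "y \<in> ?p ` {0..1}"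
    by (rule rev_image_eqI[of 0]; simp) (rule rev_image_eqI[of 1]; simp)
  ultimately show ?thesis
    using connected_componentI[of "?p ` {0..1}" S x y] by simp
qed

abbreviation cat_complement :: "nat \<Rightarrow> nat \<Rightarrow> (nat \<Rightarrow> real) set" where
  "cat_complement n m \<equiv> typeA_V n - cat_hyperplanes n m"

lemma cat_complementD:
  assumes "x \<in> cat_complement n m" "1 \<le> i" "i \<le> j" "j \<le> n" "k \<le> m"
  shows "root_pair i j x \<noteq> real k"
  using assms unfolding cat_hyperplanes_def by auto

lemma root_pair_gt_connected_component_iff:
  assumes "y \<in> connected_component_set (cat_complement n m) x"
    and "1 \<le> i" "i \<le> j" "j \<le> n" "k \<le> m"
  shows "root_pair i j y > real k \<longleftrightarrow> root_pair i j x > real k"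
proof (rule connected_component_gt_iff[OF assms(1)])
  show "\<forall>z\<in>cat_complement n m. root_pair i j z \<noteq> real k"
    using cat_complementD assms(2-) by blast
  show "continuous_on (cat_complement n m) (root_pair i j)"
    by (rule continuous_on_subset[OF continuous_on_root_pair]) simp
qed

lemma connected_component_cat_complement_eqI:
  assumes x: "x \<in> cat_complement n m" and y: "y \<in> cat_complement n m"
    and same_side: "\<And>i j k. 1 \<le> i \<Longrightarrow> i \<le> j \<Longrightarrow> j \<le> n \<Longrightarrow> k \<le> m \<Longrightarrow>
        root_pair i j y > real k \<longleftrightarrow> root_pair i j x > real k"
  shows "connected_component_set (cat_complement n m) x
       = connected_component_set (cat_complement n m) y"
proof (rule connected_component_eq, rule segment_in_connected_component)
  fix s :: real assume s: "s \<in> {0..1}"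
  let ?z = "\<lambda>k. (1 - s) * y k + s * x k"
  have "(\<Sum>i=1..n+1. ?z i) = (1 - s) * (\<Sum>i=1..n+1. y i) + s * (\<Sum>i=1..n+1. x i)"
    unfolding sum.distrib sum_distrib_left ..
  then have zV: "?z \<in> typeA_V n" using x y unfolding typeA_V_def by simp
  have "root_pair i j ?z \<noteq> real k" if ijk: "1 \<le> i" "i \<le> j" "j \<le> n" "k \<le> m" for i j k
  proof -
    let ?a = "root_pair i j y" and ?b = "root_pair i j x"
    have z: "root_pair i j ?z = (1 - s) * ?a + s * ?b"
      unfolding root_pair_def by (simp add: algebra_simps)
    have "?a \<noteq> real k" "?b \<noteq> real k"
      using cat_complementD[OF y ijk] cat_complementD[OF x ijk] .
    then consider "?a < real k" "?b < real k" | "- ?a < - real k" "- ?b < - real k"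
      using same_side[OF ijk] by linarith
    then show ?thesis
    proof cases
      case 1
      then show ?thesis
        using convex_bound_lt[where x = ?a and y = ?b and a = "real k" and u = "1 - s" and v = s] s z
        by auto
    next
      case 2
      then show ?thesis
        using convex_bound_lt[where x = "- ?a" and y = "- ?b" and a = "- real k" and u = "1 - s"
            and v = s] s z
        by (auto simp: algebra_simps)
    qed
  qed
  then have "?z \<notin> cat_hyperplanes n m" unfolding cat_hyperplanes_def by blast
  with zV show "?z \<in> cat_complement n m" by simp
qed

lemma shi_k_connected_component:
  assumes x: "x \<in> cat_complement n m" and ij: "1 \<le> i" "i \<le> j" "j \<le> n"
  shows "shi_k m (connected_component_set (cat_complement n m) x) i j
       = card {t \<in> {1..m}. x (Suc j) + real t < x i}"
proof -
  let ?R = "connected_component_set (cat_complement n m) x"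
  have "x \<in> ?R" using x by simp
  moreover have "root_pair i j z > real t \<longleftrightarrow> root_pair i j x > real t"
    if "z \<in> ?R" "t \<in> {1..m}" for z t
    using root_pair_gt_connected_component_iff[OF that(1) ij] that(2) by simp
  moreover have "root_pair i j x > real t \<longleftrightarrow> x (Suc j) + real t < x i" for t
    unfolding root_pair_def by auto
  ultimately have "(\<forall>z \<in> ?R. root_pair i j z > real t) \<longleftrightarrow> x (Suc j) + real t < x i"
    if "t \<in> {1..m}" for t
    using that by blast
  then have "{t \<in> {1..m}. \<forall>z \<in> ?R. root_pair i j z > real t}
      = {t \<in> {1..m}. x (Suc j) + real t < x i}"
    by blast
  then show ?thesis unfolding shi_k_def by simp
qed

lemma dominant_regions_eq:
  "dominant_regions n m
     = connected_component_set (cat_complement n m) ` (cat_complement n m \<inter> dominant_cone n)"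
proof -
  have "connected_component_set (cat_complement n m) x \<subseteq> dominant_cone n \<longleftrightarrow> x \<in> dominant_cone n"
    if x: "x \<in> cat_complement n m" for x
  proof
    show "connected_component_set (cat_complement n m) x \<subseteq> dominant_cone n \<Longrightarrow> x \<in> dominant_cone n"
      using x by auto
  next
    assume dom: "x \<in> dominant_cone n"
    show "connected_component_set (cat_complement n m) x \<subseteq> dominant_cone n"
      unfolding dominant_cone_def
    proof (intro subsetI CollectI allI impI)
      fix z i j assume z: "z \<in> connected_component_set (cat_complement n m) x"
        and ij: "1 \<le> i \<and> i \<le> j \<and> j \<le> n"
      then have ij': "1 \<le> i" "i \<le> j" "j \<le> n" by auto
      have "root_pair i j x \<ge> 0" using dom ij unfolding dominant_cone_def by blast
      moreover have "root_pair i j x \<noteq> real 0" using cat_complementD[OF x ij' le0] .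
      ultimately have "root_pair i j x > real 0" by simp
      then show "root_pair i j z \<ge> 0"
        using root_pair_gt_connected_component_iff[OF z ij' le0] by simp
    qed
  qed
  then show ?thesis
    unfolding dominant_regions_def cat_regions_def by blast
qed

section \<open>Generic decreasing points\<close>

definition generic_on :: "nat set \<Rightarrow> nat \<Rightarrow> (nat \<Rightarrow> real) \<Rightarrow> bool" where
  "generic_on I m x \<longleftrightarrow> (\<forall>a\<in>I. \<forall>b\<in>I. a \<noteq> b \<longrightarrow> (\<forall>t\<le>m. x a + real t \<noteq> x b))"

definition row_count :: "nat \<Rightarrow> nat \<Rightarrow> (nat \<Rightarrow> real) \<Rightarrow> nat \<Rightarrow> nat" where
  "row_count m N x i = card {p \<in> {Suc i..N} \<times> {1..m}. x (fst p) + real (snd p) < x i}"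

lemma generic_onD:
  assumes gen: "generic_on I m x" and ab: "a \<in> I" "b \<in> I" "a \<noteq> b" and t: "\<bar>t\<bar> \<le> int m"
  shows "x a + of_int t \<noteq> x b"
proof (cases "t \<ge> 0")
  case True
  have "x a + real (nat t) \<noteq> x b" using gen ab t unfolding generic_on_def by auto
  with True show ?thesis by simp
next
  case False
  have "x b + real (nat (- t)) \<noteq> x a" using gen ab t unfolding generic_on_def by auto
  with False show ?thesis by auto
qed

lemma generic_on_subset: "generic_on I m x \<Longrightarrow> J \<subseteq> I \<Longrightarrow> generic_on J m x"
  unfolding generic_on_def by blast

lemma dominant_generic_iff:
  assumes "x \<in> typeA_V n"
  shows "x \<in> cat_complement n m \<inter> dominant_cone n
     \<longleftrightarrow> strict_antimono_on {1..Suc n} x \<and> generic_on {1..Suc n} m x"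
proof
  assume x: "x \<in> cat_complement n m \<inter> dominant_cone n"
  have off: "x i - x (Suc j) \<noteq> real k" if "1 \<le> i" "i \<le> j" "j \<le> n" "k \<le> m" for i j k
    using cat_complementD[of x n m i j k] x that unfolding root_pair_def by simp
  have dom: "x (Suc j) \<le> x i" if "1 \<le> i" "i \<le> j" "j \<le> n" for i j
  proof -
    have "root_pair i j x \<ge> 0" using x that unfolding dominant_cone_def by blast
    then show ?thesis by (simp add: root_pair_def)
  qed
  have less: "x b < x a" if ab: "1 \<le> a" "a < b" "b \<le> Suc n" for a b
  proof -
    obtain j where b: "b = Suc j" using ab by (cases b) auto
    show ?thesis using off[of a j 0] dom[of a j] ab unfolding b by simp
  qed
  have "generic_on {1..Suc n} m x"
    unfolding generic_on_def
  proof (intro ballI impI allI)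
    fix a b t assume a: "a \<in> {1..Suc n}" and b: "b \<in> {1..Suc n}" and "a \<noteq> b" and t: "t \<le> m"
    then consider "a < b" | "b < a" by linarith
    then show "x a + real t \<noteq> x b"
    proof cases
      case 1
      then have "x b < x a" using less a b by simp
      then show ?thesis using of_nat_0_le_iff[of t] by linarith
    next
      case 2
      then obtain j where "a = Suc j" using 2 by (cases a) auto
      then show ?thesis using off[of b j t] 2 a b t by simp
    qed
  qed
  moreover have "strict_antimono_on {1..Suc n} x"
    by (rule monotone_onI) (use less in simp)
  ultimately show "strict_antimono_on {1..Suc n} x \<and> generic_on {1..Suc n} m x" by simp
next
  assume "strict_antimono_on {1..Suc n} x \<and> generic_on {1..Suc n} m x"
  then have anti: "strict_antimono_on {1..Suc n} x" and gen: "generic_on {1..Suc n} m x"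
    by simp_all
  have less: "x b < x a" if "1 \<le> a" "a < b" "b \<le> Suc n" for a b
    using monotone_onD[OF anti, of a b] that by simp
  have "x \<in> dominant_cone n"
    unfolding dominant_cone_def
  proof (intro CollectI allI impI)
    fix i j assume "1 \<le> i \<and> i \<le> j \<and> j \<le> n"
    then have "x (j + 1) < x i" using less[of i "j + 1"] by simp
    then show "root_pair i j x \<ge> 0" by (simp add: root_pair_def)
  qed
  moreover have "x \<notin> cat_hyperplanes n m"
  proof
    assume "x \<in> cat_hyperplanes n m"
    then obtain i j k where ijk: "1 \<le> i" "i \<le> j" "j \<le> n" "k \<le> m"
      and "x i - x (j + 1) = real k"
      unfolding cat_hyperplanes_def root_pair_def by blast
    then have "x (j + 1) + real k = x i" by simp
    moreover have "x (j + 1) + real k \<noteq> x i"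
      using gen ijk unfolding generic_on_def by simp
    ultimately show False by contradiction
  qed
  ultimately show "x \<in> cat_complement n m \<inter> dominant_cone n" using assms by simp
qed

lemma phi_connected_component:
  assumes x: "x \<in> cat_complement n m"
  shows "phi n m (connected_component_set (cat_complement n m) x)
       = (\<lambda>i. if i \<in> {1..n} then row_count m (Suc n) x i else 0)"
proof -
  have "(\<Sum>j=i..n. shi_k m (connected_component_set (cat_complement n m) x) i j)
      = row_count m (Suc n) x i" if i: "i \<in> {1..n}" for i
  proof -
    have "(\<Sum>j=i..n. shi_k m (connected_component_set (cat_complement n m) x) i j)
        = (\<Sum>j=i..n. card {t \<in> {1..m}. x (Suc j) + real t < x i})"
      using i by (intro sum.cong refl shi_k_connected_component[OF x]) auto
    also have "\<dots> = (\<Sum>l=Suc i..Suc n. card {t \<in> {1..m}. x l + real t < x i})"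
      by (rule sum.shift_bounds_cl_Suc_ivl[symmetric])
    also have "\<dots> = card (SIGMA l:{Suc i..Suc n}. {t \<in> {1..m}. x l + real t < x i})"
      by (rule card_SigmaI[symmetric]) auto
    also have "(SIGMA l:{Suc i..Suc n}. {t \<in> {1..m}. x l + real t < x i})
        = {p \<in> {Suc i..Suc n} \<times> {1..m}. x (fst p) + real (snd p) < x i}"
      by auto
    finally show ?thesis unfolding row_count_def .
  qed
  then show ?thesis unfolding phi_def by auto
qed

lemma row_count_le: "row_count m N x i \<le> m * (N - i)"
proof -
  have "row_count m N x i \<le> card ({Suc i..N} \<times> {1..m})"
    unfolding row_count_def by (rule card_mono) auto
  then show ?thesis by (simp add: card_cartesian_product mult.commute)
qed

lemma row_count_Suc_le:
  assumes "x (Suc i) < x i"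
  shows "row_count m N x (Suc i) \<le> row_count m N x i"
  unfolding row_count_def by (rule card_mono) (use assms in auto)

lemma phi_connected_component_in_partitions_P:
  assumes x: "x \<in> cat_complement n m \<inter> dominant_cone n"
  shows "phi n m (connected_component_set (cat_complement n m) x) \<in> partitions_P n m"
proof -
  have anti: "strict_antimono_on {1..Suc n} x"
    using dominant_generic_iff[of x n m] x by simp
  have "row_count m (Suc n) x (Suc i) \<le> row_count m (Suc n) x i" if "1 \<le> i" "i < n" for i
    using monotone_onD[OF anti, of i "Suc i"] that by (intro row_count_Suc_le) simp
  moreover have "row_count m (Suc n) x i \<le> m * (n - i + 1)" if "i \<le> n" for i
    using row_count_le[of m "Suc n" x i] that by (simp add: Suc_diff_le)
  moreover have "x \<in> cat_complement n m" using x by simp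
  ultimately show ?thesis
    unfolding partitions_P_def by (simp add: phi_connected_component)
qed

section \<open>Row counts determine the region\<close>

definition same_gap_signs_on :: "nat set \<Rightarrow> nat \<Rightarrow> (nat \<Rightarrow> real) \<Rightarrow> (nat \<Rightarrow> real) \<Rightarrow> bool" where
  "same_gap_signs_on I m x y \<longleftrightarrow>
     (\<forall>a\<in>I. \<forall>b\<in>I. \<forall>t::int. \<bar>t\<bar> \<le> int m \<longrightarrow> (x b + of_int t < x a \<longleftrightarrow> y b + of_int t < y a))"

lemma same_gap_signs_onD:
  assumes "same_gap_signs_on I m x y" "a \<in> I" "b \<in> I" "\<bar>t\<bar> \<le> int m"
  shows "x b + of_int t < x a \<longleftrightarrow> y b + of_int t < y a"
  using assms unfolding same_gap_signs_on_def by simp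

lemma Collect_less_eq_if_card_eq:
  fixes f g :: "'a \<Rightarrow> 'b::linorder"
  assumes fin: "finite S" and order_iso: "\<And>p q. p \<in> S \<Longrightarrow> q \<in> S \<Longrightarrow> f p < f q \<longleftrightarrow> g p < g q"
    and card_eq: "card {p\<in>S. f p < c} = card {p\<in>S. g p < d}"
  shows "{p\<in>S. f p < c} = {p\<in>S. g p < d}"
proof -
  let ?A = "{p\<in>S. f p < c}" and ?B = "{p\<in>S. g p < d}"
  have "?A \<subseteq> ?B \<or> ?B \<subseteq> ?A"
  proof (rule ccontr)
    assume "\<not> (?A \<subseteq> ?B \<or> ?B \<subseteq> ?A)"
    then obtain p q where p: "p \<in> ?A" "p \<notin> ?B" and q: "q \<in> ?B" "q \<notin> ?A" by blast
    then have "f p < f q" by auto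
    then have "g p < g q" using order_iso p q by auto
    then show False using p q by auto
  qed
  moreover have "finite ?A" "finite ?B" using fin by auto
  ultimately show ?thesis
    using card_seteq[of ?B ?A] card_seteq[of ?A ?B] card_eq by auto
qed

lemma generic_on_less_flip:
  assumes "generic_on I m x" "a \<in> I" "b \<in> I" "a \<noteq> b" "\<bar>t\<bar> \<le> int m"
  shows "x b + of_int t < x a \<longleftrightarrow> \<not> x a + of_int (- t) < x b"
  using generic_onD[OF assms(1-4), of "- t"] assms(5) by auto

lemma row_gap_signs_eq_if_row_count_eq:
  assumes same: "same_gap_signs_on {Suc i..N} m x y"
    and count: "row_count m N x i = row_count m N y i"
    and l: "l \<in> {Suc i..N}" and t: "t \<in> {1..m}"
  shows "x l + real t < x i \<longleftrightarrow> y l + real t < y i"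
proof -
  let ?S = "{Suc i..N} \<times> {1..m}"
  have "x (fst p) + real (snd p) < x (fst q) + real (snd q)
      \<longleftrightarrow> y (fst p) + real (snd p) < y (fst q) + real (snd q)"
    if "p \<in> ?S" "q \<in> ?S" for p q
  proof -
    have "fst q \<in> {Suc i..N}" "fst p \<in> {Suc i..N}" "\<bar>int (snd p) - int (snd q)\<bar> \<le> int m"
      using that by (auto simp: mem_Times_iff)
    then have "x (fst p) + of_int (int (snd p) - int (snd q)) < x (fst q)
        \<longleftrightarrow> y (fst p) + of_int (int (snd p) - int (snd q)) < y (fst q)"
      by (rule same_gap_signs_onD[OF same])
    then show ?thesis by (simp add: algebra_simps)
  qed
  then have "{p \<in> ?S. x (fst p) + real (snd p) < x i} = {p \<in> ?S. y (fst p) + real (snd p) < y i}"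
    by (intro Collect_less_eq_if_card_eq) (use count in \<open>simp_all add: row_count_def\<close>)
  then have "(l, t) \<in> {p \<in> ?S. x (fst p) + real (snd p) < x i}
      \<longleftrightarrow> (l, t) \<in> {p \<in> ?S. y (fst p) + real (snd p) < y i}"
    by (rule arg_cong)
  then show ?thesis using l t by simp
qed

lemma same_gap_signs_on_insert:
  assumes anti_x: "strict_antimono_on {i..N} x" and anti_y: "strict_antimono_on {i..N} y"
    and gen_x: "generic_on {i..N} m x" and gen_y: "generic_on {i..N} m y"
    and same: "same_gap_signs_on {Suc i..N} m x y"
    and row: "\<And>l t. l \<in> {Suc i..N} \<Longrightarrow> t \<in> {1..m} \<Longrightarrow> x l + real t < x i \<longleftrightarrow> y l + real t < y i"
  shows "same_gap_signs_on {i..N} m x y"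
proof -
  have top: "x b + of_int t < x i \<longleftrightarrow> y b + of_int t < y i"
    if b: "b \<in> {i..N}" and t: "\<bar>t\<bar> \<le> int m" for b t
  proof (cases "b = i")
    case False
    then have b': "b \<in> {Suc i..N}" using b by auto
    have "x b < x i" "y b < y i"
      using monotone_onD[OF anti_x, of i b] monotone_onD[OF anti_y, of i b] b' by auto
    show ?thesis
    proof (cases "t \<le> 0")
      case True
      then show ?thesis using \<open>x b < x i\<close> \<open>y b < y i\<close> by linarith
    next
      case False
      then have t_nat: "of_int t = real (nat t)" and "nat t \<in> {1..m}" using t by auto
      then have "x b + real (nat t) < x i \<longleftrightarrow> y b + real (nat t) < y i" by (intro row b')
      then show ?thesis unfolding t_nat .
    qed
  qed simp
  show ?thesis
    unfolding same_gap_signs_on_def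
  proof (intro ballI allI impI)
    fix a b and t :: int
    assume a: "a \<in> {i..N}" and b: "b \<in> {i..N}" and t: "\<bar>t\<bar> \<le> int m"
    consider "a = i" | "b = i" "a \<noteq> i" | "a \<in> {Suc i..N}" "b \<in> {Suc i..N}"
      using a b by force
    then show "x b + of_int t < x a \<longleftrightarrow> y b + of_int t < y a"
    proof cases
      case 1
      then show ?thesis using top[OF b t] by simp
    next
      case 2
      have i: "i \<in> {i..N}" using a by simp
      have "\<bar>- t\<bar> \<le> int m" using t by simp
      then have "x a + of_int (- t) < x i \<longleftrightarrow> y a + of_int (- t) < y i"
        by (rule top[OF a])
      moreover have "x i + of_int t < x a \<longleftrightarrow> \<not> x a + of_int (- t) < x i"
        by (rule generic_on_less_flip[OF gen_x a i \<open>a \<noteq> i\<close> t])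
      moreover have "y i + of_int t < y a \<longleftrightarrow> \<not> y a + of_int (- t) < y i"
        by (rule generic_on_less_flip[OF gen_y a i \<open>a \<noteq> i\<close> t])
      ultimately show ?thesis unfolding \<open>b = i\<close> by argo
    next
      case 3
      then show ?thesis using same_gap_signs_onD[OF same _ _ t] by blast
    qed
  qed
qed

lemma same_gap_signs_on_if_row_count_eq:
  assumes "1 \<le> N"
    and anti_x: "strict_antimono_on {1..N} x" and anti_y: "strict_antimono_on {1..N} y"
    and gen_x: "generic_on {1..N} m x" and gen_y: "generic_on {1..N} m y"
    and count: "\<And>i. 1 \<le> i \<Longrightarrow> i < N \<Longrightarrow> row_count m N x i = row_count m N y i"
  shows "same_gap_signs_on {1..N} m x y"
  using \<open>1 \<le> N\<close>
proof (induction rule: inc_induct)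
  case base
  show ?case unfolding same_gap_signs_on_def by auto
next
  case (step i)
  have sub: "{i..N} \<subseteq> {1..N}" using step.hyps by auto
  show ?case
  proof (rule same_gap_signs_on_insert)
    show "strict_antimono_on {i..N} x" "strict_antimono_on {i..N} y"
      using monotone_on_subset[OF anti_x sub] monotone_on_subset[OF anti_y sub] .
    show "generic_on {i..N} m x" "generic_on {i..N} m y"
      using generic_on_subset[OF gen_x sub] generic_on_subset[OF gen_y sub] .
    show "x l + real t < x i \<longleftrightarrow> y l + real t < y i" if "l \<in> {Suc i..N}" "t \<in> {1..m}" for l t
      using row_gap_signs_eq_if_row_count_eq[OF step.IH count that] step.hyps by simp
  qed (rule step.IH)
qed

lemma connected_component_eq_if_row_count_eq:
  assumes x: "x \<in> cat_complement n m \<inter> dominant_cone n"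
    and y: "y \<in> cat_complement n m \<inter> dominant_cone n"
    and count: "\<And>i. i \<in> {1..n} \<Longrightarrow> row_count m (Suc n) x i = row_count m (Suc n) y i"
  shows "connected_component_set (cat_complement n m) x
       = connected_component_set (cat_complement n m) y"
proof (rule connected_component_cat_complement_eqI)
  have "strict_antimono_on {1..Suc n} x" "generic_on {1..Suc n} m x"
    "strict_antimono_on {1..Suc n} y" "generic_on {1..Suc n} m y"
    using dominant_generic_iff[of x n m] dominant_generic_iff[of y n m] x y by auto
  then have same: "same_gap_signs_on {1..Suc n} m x y"
    by (intro same_gap_signs_on_if_row_count_eq) (use count in auto)
  fix i j k assume ijk: "1 \<le> i" "i \<le> j" "j \<le> n" "k \<le> m"
  then have "x (Suc j) + of_int (int k) < x i \<longleftrightarrow> y (Suc j) + of_int (int k) < y i"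
    by (intro same_gap_signs_onD[OF same]) auto
  then show "root_pair i j y > real k \<longleftrightarrow> root_pair i j x > real k"
    unfolding root_pair_def by auto
qed (use x y in auto)

section \<open>Every partition is attained\<close>

lemma exists_gap_above:
  fixes P :: "real set"
  assumes fin: "finite P"
  shows "\<exists>y'>y. y' \<notin> P \<and> {p\<in>P. p < y'} = {p\<in>P. p \<le> y}"
proof -
  define q where "q = Min (insert (y + 1) {p\<in>P. y < p})"
  have fin': "finite (insert (y + 1) {p\<in>P. y < p})" using fin by simp
  have "y < q" unfolding q_def using fin' by simp
  have q_le: "q \<le> p" if "p \<in> P" "y < p" for p
    unfolding q_def using fin' that by simp
  show ?thesis
  proof (intro exI conjI)
    show "y < (y + q) / 2" using \<open>y < q\<close> by simp
    show "(y + q) / 2 \<notin> P" using q_le[of "(y + q) / 2"] \<open>y < q\<close> by auto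
    show "{p\<in>P. p < (y + q) / 2} = {p\<in>P. p \<le> y}"
      using q_le \<open>y < q\<close> by force
  qed
qed

lemma exists_gap_count_Suc:
  fixes P :: "real set"
  assumes fin: "finite P" and y: "y \<notin> P" and less: "card {p\<in>P. p < y} < card P"
  shows "\<exists>y'>y. y' \<notin> P \<and> card {p\<in>P. p < y'} = Suc (card {p\<in>P. p < y})"
proof -
  let ?A = "{p\<in>P. y < p}"
  have "?A \<noteq> {}"
  proof
    assume "?A = {}"
    then have "p < y" if "p \<in> P" for p
      using y that by (metis (mono_tags, lifting) empty_Collect_eq linorder_neqE)
    then have "{p\<in>P. p < y} = P" by blast
    then show False using less by simp
  qed
  moreover have "finite ?A" using fin by simp
  ultimately have q: "Min ?A \<in> P" "y < Min ?A" and q_le: "\<And>p. p \<in> ?A \<Longrightarrow> Min ?A \<le> p"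
    using Min_in[of ?A] by auto
  obtain y' where y': "Min ?A < y'" "y' \<notin> P" "{p\<in>P. p < y'} = {p\<in>P. p \<le> Min ?A}"
    using exists_gap_above[OF fin] by blast
  have "p < y" if "p \<in> P" "p < Min ?A" for p
  proof -
    have "\<not> y < p" using q_le[of p] that by auto
    moreover have "p \<noteq> y" using y that by auto
    ultimately show ?thesis by simp
  qed
  then have "{p\<in>P. p \<le> Min ?A} = insert (Min ?A) {p\<in>P. p < y}"
    using q by (auto simp: order.order_iff_strict)
  moreover have "Min ?A \<notin> {p\<in>P. p < y}" using q by auto
  ultimately have "card {p\<in>P. p < y'} = Suc (card {p\<in>P. p < y})"
    using y'(3) fin by simp
  then show ?thesis using y' q by (intro exI[of _ y']) auto
qed

lemma exists_gap_with_count: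
  fixes P :: "real set"
  assumes fin: "finite P" and y: "y \<notin> P" and c: "card {p\<in>P. p < y} \<le> c" "c \<le> card P"
  shows "\<exists>y'>y. y' \<notin> P \<and> card {p\<in>P. p < y'} = c"
proof -
  have "\<exists>y'>y. y' \<notin> P \<and> card {p\<in>P. p < y'} = card {p\<in>P. p < y} + d"
    if "y \<notin> P" "card {p\<in>P. p < y} + d \<le> card P" for d y
    using that
  proof (induction d arbitrary: y)
    case 0
    then have "{p\<in>P. p \<le> y} = {p\<in>P. p < y}" by (auto simp: order.order_iff_strict)
    then show ?case using exists_gap_above[OF fin, of y] by auto
  next
    case (Suc d)
    obtain y1 where y1: "y < y1" "y1 \<notin> P" "card {p\<in>P. p < y1} = Suc (card {p\<in>P. p < y})"
      using exists_gap_count_Suc[OF fin Suc.prems(1)] Suc.prems(2) by auto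
    obtain y' where "y1 < y'" "y' \<notin> P" "card {p\<in>P. p < y'} = card {p\<in>P. p < y1} + d"
      using Suc.IH[OF y1(2)] y1(3) Suc.prems(2) by auto
    then show ?case using y1 by (intro exI[of _ y']) auto
  qed
  from this[of y "c - card {p\<in>P. p < y}"] show ?thesis using y c by simp
qed

lemma card_image_Collect_less:
  assumes "inj_on f S"
  shows "card {v \<in> f ` S. v < c} = card {p \<in> S. f p < c}"
proof -
  have "{v \<in> f ` S. v < c} = f ` {p \<in> S. f p < c}" by auto
  moreover have "inj_on f {p \<in> S. f p < c}" using assms by (rule inj_on_subset) auto
  ultimately show ?thesis by (simp add: card_image)
qed

lemma inj_on_shifts:
  assumes gen: "generic_on I m x"
  shows "inj_on (\<lambda>p. x (fst p) + real (snd p)) (I \<times> {1..m})"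
proof (rule inj_onI)
  fix p q assume p: "p \<in> I \<times> {1..m}" and q: "q \<in> I \<times> {1..m}"
    and eq: "x (fst p) + real (snd p) = x (fst q) + real (snd q)"
  have "fst p = fst q"
  proof (rule ccontr)
    assume "fst p \<noteq> fst q"
    moreover have "fst p \<in> I" "fst q \<in> I" "\<bar>int (snd p) - int (snd q)\<bar> \<le> int m"
      using p q by auto
    ultimately have "x (fst p) + of_int (int (snd p) - int (snd q)) \<noteq> x (fst q)"
      by (intro generic_onD[OF gen])
    then show False using eq by simp
  qed
  with eq show "p = q" by (simp add: prod_eq_iff)
qed

lemma strict_antimono_on_insert_update:
  fixes J :: "'a::linorder set" and x :: "'a \<Rightarrow> 'b::order"
  assumes anti: "strict_antimono_on J x" and above: "\<forall>l\<in>J. i < l \<and> x l < y"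
  shows "strict_antimono_on (insert i J) (x(i := y))"
proof (rule monotone_onI)
  fix a b assume a: "a \<in> insert i J" and b: "b \<in> insert i J" and ab: "a < b"
  have i: "i \<notin> J" using above by blast
  have "b \<noteq> i"
  proof
    assume "b = i"
    then have "a \<in> J" using a ab by auto
    then show False using above ab \<open>b = i\<close> by auto
  qed
  then have "b \<in> J" using b by simp
  show "(x(i := y)) b < (x(i := y)) a"
  proof (cases "a = i")
    case True
    then show ?thesis using above \<open>b \<in> J\<close> i by auto
  next
    case False
    then have "a \<in> J" using a by simp
    then show ?thesis using monotone_onD[OF anti \<open>a \<in> J\<close> \<open>b \<in> J\<close> ab] i \<open>b \<in> J\<close> by auto
  qed
qed

lemma generic_on_insert_update:
  assumes gen: "generic_on J m x" and i: "i \<notin> J"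
    and above: "\<forall>l\<in>J. x l < y" and avoid: "\<forall>l\<in>J. \<forall>t\<in>{1..m}. x l + real t \<noteq> y"
  shows "generic_on (insert i J) m (x(i := y))"
  unfolding generic_on_def
proof (intro ballI impI allI)
  fix a b t assume a: "a \<in> insert i J" and b: "b \<in> insert i J" and "a \<noteq> b" and t: "t \<le> m"
  consider "a = i" "b \<in> J" | "a \<in> J" "b = i" | "a \<in> J" "b \<in> J"
    using a b \<open>a \<noteq> b\<close> by blast
  then show "(x(i := y)) a + real t \<noteq> (x(i := y)) b"
  proof cases
    case 1
    have "x b < y" "b \<noteq> i" using above i 1 by auto
    then have "x b < y + real t" by simp
    then show ?thesis using 1 \<open>b \<noteq> i\<close> by simp
  next
    case 2
    have "x a + real t \<noteq> y"
    proof (cases "t = 0")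
      case True
      have "x a < y" using above 2 by simp
      with True show ?thesis by simp
    next
      case False
      then show ?thesis using avoid 2 t by simp
    qed
    then show ?thesis using 2 i by auto
  next
    case 3
    have "x a + real t \<noteq> x b" using gen 3 \<open>a \<noteq> b\<close> t unfolding generic_on_def by blast
    then show ?thesis using 3 i by auto
  qed
qed

lemma row_count_fun_upd_self:
  "row_count m N (x(i := y)) i = card {p \<in> {Suc i..N} \<times> {1..m}. x (fst p) + real (snd p) < y}"
  unfolding row_count_def by (intro arg_cong[where f = card] Collect_cong) (auto simp: mem_Times_iff)

lemma row_count_fun_upd_less:
  assumes "i < k"
  shows "row_count m N (x(i := y)) k = row_count m N x k"
proof -
  have "(x(i := y)) k = x k" "\<And>l. l \<in> {Suc k..N} \<Longrightarrow> (x(i := y)) l = x l"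
    using assms by auto
  then show ?thesis
    using assms unfolding row_count_def
    by (intro arg_cong[where f = card] Collect_cong) (auto simp: mem_Times_iff)
qed

lemma exists_update_with_row_count:
  assumes i: "i < N" and anti: "strict_antimono_on {Suc i..N} x" and gen: "generic_on {Suc i..N} m x"
    and c: "row_count m N x (Suc i) \<le> c" "c \<le> m * (N - i)"
  shows "\<exists>y. strict_antimono_on {i..N} (x(i := y)) \<and> generic_on {i..N} m (x(i := y))
      \<and> row_count m N (x(i := y)) i = c"
proof -
  let ?S = "{Suc i..N} \<times> {1..m}" and ?f = "\<lambda>p. x (fst p) + real (snd p)"
  have inj: "inj_on ?f ?S" by (rule inj_on_shifts[OF gen])
  have card_image_S: "card (?f ` ?S) = m * (N - i)"
    using card_image[OF inj] by (simp add: card_cartesian_product)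
  have Suc_i: "Suc i \<in> {Suc i..N}" using i by simp
  have below: "x l < x (Suc i)" if "l \<in> {Suc (Suc i)..N}" for l
    using monotone_onD[OF anti Suc_i, of l] that by simp
  have "x (Suc i) \<notin> ?f ` ?S"
  proof
    assume "x (Suc i) \<in> ?f ` ?S"
    then obtain l t where l: "l \<in> {Suc i..N}" "t \<in> {1..m}" and eq: "x (Suc i) = x l + real t"
      by auto
    then have "l \<noteq> Suc i" by auto
    moreover have "\<bar>int t\<bar> \<le> int m" using l(2) by simp
    ultimately have "x l + of_int (int t) \<noteq> x (Suc i)"
      by (intro generic_onD[OF gen l(1) Suc_i])
    then show False using eq by simp
  qed
  moreover have "{p \<in> ?S. ?f p < x (Suc i)}
      = {p \<in> {Suc (Suc i)..N} \<times> {1..m}. ?f p < x (Suc i)}"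
  proof (intro set_eqI iffI)
    fix p assume p: "p \<in> {p \<in> ?S. ?f p < x (Suc i)}"
    then have "fst p \<noteq> Suc i" by auto
    with p show "p \<in> {p \<in> {Suc (Suc i)..N} \<times> {1..m}. ?f p < x (Suc i)}"
      by (auto simp: mem_Times_iff)
  qed (auto simp: mem_Times_iff)
  then have "card {v \<in> ?f ` ?S. v < x (Suc i)} = row_count m N x (Suc i)"
    unfolding card_image_Collect_less[OF inj] row_count_def by simp
  ultimately obtain y where y: "x (Suc i) < y" "y \<notin> ?f ` ?S" "card {v \<in> ?f ` ?S. v < y} = c"
    using exists_gap_with_count[of "?f ` ?S" "x (Suc i)" c] c card_image_S by auto
  have above: "\<forall>l\<in>{Suc i..N}. i < l \<and> x l < y"
  proof
    fix l assume l: "l \<in> {Suc i..N}"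
    have "x l \<le> x (Suc i)" using below[of l] l by (cases "l = Suc i") auto
    then show "i < l \<and> x l < y" using l y(1) by auto
  qed
  have avoid: "\<forall>l\<in>{Suc i..N}. \<forall>t\<in>{1..m}. x l + real t \<noteq> y"
  proof (intro ballI)
    fix l t assume "l \<in> {Suc i..N}" "t \<in> {1..m}"
    then have "?f (l, t) \<in> ?f ` ?S" by (intro imageI) simp
    then show "x l + real t \<noteq> y" using y(2) by auto
  qed
  have split: "{i..N} = insert i {Suc i..N}" using i by auto
  have "strict_antimono_on {i..N} (x(i := y))"
    unfolding split by (rule strict_antimono_on_insert_update[OF anti above])
  moreover have "generic_on {i..N} m (x(i := y))"
    unfolding split by (rule generic_on_insert_update[OF gen _ _ avoid]) (use above in auto)
  moreover have "row_count m N (x(i := y)) i = c"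
    using y(3) unfolding row_count_fun_upd_self card_image_Collect_less[OF inj] .
  ultimately show ?thesis by blast
qed

lemma exists_strict_antimono_generic_with_row_counts:
  assumes lam: "lam \<in> partitions_P n m"
  shows "\<exists>x. strict_antimono_on {1..Suc n} x \<and> generic_on {1..Suc n} m x
    \<and> (\<forall>k\<in>{1..n}. row_count m (Suc n) x k = lam k)"
proof -
  have "1 \<le> Suc n" by simp
  then show ?thesis
  proof (induction rule: inc_induct)
    case base
    have "strict_antimono_on {Suc n..Suc n} (\<lambda>_. 0 :: real)" by (auto intro: monotone_onI)
    moreover have "generic_on {Suc n..Suc n} m (\<lambda>_. 0)" unfolding generic_on_def by simp
    ultimately show ?case by auto
  next
    case (step i)
    then obtain x where x: "strict_antimono_on {Suc i..Suc n} x" "generic_on {Suc i..Suc n} m x"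
      "\<forall>k\<in>{Suc i..n}. row_count m (Suc n) x k = lam k"
      by blast
    have "row_count m (Suc n) x (Suc i) \<le> lam i"
    proof (cases "Suc i \<le> n")
      case True
      then show ?thesis using x(3) lam step.hyps unfolding partitions_P_def by auto
    next
      case False
      then show ?thesis using row_count_le[of m "Suc n" x "Suc i"] step.hyps by simp
    qed
    moreover have "lam i \<le> m * (Suc n - i)"
      using lam step.hyps unfolding partitions_P_def by (auto simp: Suc_diff_le)
    ultimately obtain y where "strict_antimono_on {i..Suc n} (x(i := y))"
      "generic_on {i..Suc n} m (x(i := y))" "row_count m (Suc n) (x(i := y)) i = lam i"
      using exists_update_with_row_count[OF step.hyps(2) x(1,2)] by blast
    moreover have "\<forall>k\<in>{Suc i..n}. row_count m (Suc n) (x(i := y)) k = lam k"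
      using x(3) row_count_fun_upd_less by simp
    moreover have "{i..n} = insert i {Suc i..n}" using step.hyps by auto
    ultimately show ?case by auto
  qed
qed

lemma exists_dominant_point_with_row_counts:
  assumes lam: "lam \<in> partitions_P n m"
  shows "\<exists>x \<in> cat_complement n m \<inter> dominant_cone n. \<forall>k\<in>{1..n}. row_count m (Suc n) x k = lam k"
proof -
  obtain x where anti: "strict_antimono_on {1..Suc n} x" and gen: "generic_on {1..Suc n} m x"
    and count: "\<forall>k\<in>{1..n}. row_count m (Suc n) x k = lam k"
    using exists_strict_antimono_generic_with_row_counts[OF lam] by blast
  define c where "c = (\<Sum>i=1..n+1. x i) / real (n + 1)"
  define z where "z = (\<lambda>k. if k \<in> {1..Suc n} then x k - c else 0)"
  have "(\<Sum>i=1..n+1. z i) = (\<Sum>i=1..n+1. x i) - real (n + 1) * c"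
    unfolding z_def by (simp add: sum_subtractf)
  then have "z \<in> typeA_V n" unfolding typeA_V_def c_def by (simp add: z_def)
  moreover have "strict_antimono_on {1..Suc n} z"
    using anti unfolding z_def by (auto intro!: monotone_onI dest: monotone_onD)
  moreover have "generic_on {1..Suc n} m z"
    using gen unfolding generic_on_def z_def by (auto simp: algebra_simps)
  ultimately have "z \<in> cat_complement n m \<inter> dominant_cone n"
    using dominant_generic_iff[of z n m] by blast
  moreover have "row_count m (Suc n) z k = row_count m (Suc n) x k" if "k \<in> {1..n}" for k
    unfolding row_count_def z_def
    by (intro arg_cong[where f = card] Collect_cong conj_cong refl) (use that in \<open>auto simp: mem_Times_iff\<close>)
  ultimately show ?thesis using count by (intro bexI[of _ z]) auto
qed

section \<open>The bijection\<close>

lemma phi_connected_component_dominant: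
  assumes "x \<in> cat_complement n m \<inter> dominant_cone n"
  shows "phi n m (connected_component_set (cat_complement n m) x)
       = (\<lambda>i. if i \<in> {1..n} then row_count m (Suc n) x i else 0)"
  using phi_connected_component assms by simp

lemma inj_on_phi_dominant_regions:
  "inj_on (phi n m)
     (connected_component_set (cat_complement n m) ` (cat_complement n m \<inter> dominant_cone n))"
proof (rule inj_onI)
  fix R S assume "R \<in> connected_component_set (cat_complement n m)
      ` (cat_complement n m \<inter> dominant_cone n)"
    and "S \<in> connected_component_set (cat_complement n m) ` (cat_complement n m \<inter> dominant_cone n)"
  then obtain x y where x: "x \<in> cat_complement n m \<inter> dominant_cone n"
    and R: "R = connected_component_set (cat_complement n m) x"
    and y: "y \<in> cat_complement n m \<inter> dominant_cone n"
    and S: "S = connected_component_set (cat_complement n m) y"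
    by blast
  assume "phi n m R = phi n m S"
  then have "row_count m (Suc n) x i = row_count m (Suc n) y i" if "i \<in> {1..n}" for i
    using fun_cong[of "phi n m R" "phi n m S" i] that
    unfolding R S phi_connected_component_dominant[OF x] phi_connected_component_dominant[OF y]
    by simp
  then show "R = S"
    unfolding R S by (rule connected_component_eq_if_row_count_eq[OF x y])
qed

lemma phi_image_dominant_regions:
  "phi n m ` connected_component_set (cat_complement n m) ` (cat_complement n m \<inter> dominant_cone n)
     = partitions_P n m"
proof (intro equalityI subsetI)
  fix lam assume "lam \<in> phi n m ` connected_component_set (cat_complement n m)
      ` (cat_complement n m \<inter> dominant_cone n)"
  then show "lam \<in> partitions_P n m" using phi_connected_component_in_partitions_P by auto
next
  fix lam assume lam: "lam \<in> partitions_P n m"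
  then obtain x where x: "x \<in> cat_complement n m \<inter> dominant_cone n"
    and count: "\<forall>k\<in>{1..n}. row_count m (Suc n) x k = lam k"
    using exists_dominant_point_with_row_counts by blast
  have "lam i = 0" if "i \<notin> {1..n}" for i using lam that unfolding partitions_P_def by blast
  then have "phi n m (connected_component_set (cat_complement n m) x) = lam"
    using count unfolding phi_connected_component_dominant[OF x] by auto
  then show "lam \<in> phi n m ` connected_component_set (cat_complement n m)
      ` (cat_complement n m \<inter> dominant_cone n)"
    using x by blast
qed

theorem theorem4p1:
  fixes n m :: nat
  assumes "0 < n" and "0 < m"
  shows "bij_betw (phi n m) (dominant_regions n m) (partitions_P n m)"
  unfolding bij_betw_def dominant_regions_eq
  using inj_on_phi_dominant_regions phi_image_dominant_regions by blast

end
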